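(* Assume that for every $1\le i<j\le M$ and every $\alpha\in[0,1]$, $\rho^{\mathrm w}_\alpha(p_i,p_j)\in(0,\infty)$. Let $C_M^{\mathrm w}=\min_{1\le i<j\le M}D_C^{\mathrm w}(\mathbb P_i,\mathbb P_j)$. Then \[ L^*_{n,M}=\exp\{-nC_M^{\mathrm w}+o(n)\},\qquad n\to\infty, \] equivalently $\lim_{n\to\infty}-\frac1n\ln L^*_{n,M}=C_M^{\mathrm w}$.
   Context: Fix $M\ge2$. Let $\mu$ be a $\sigma$-finite measure on a Polish space $\mathcal X$, $\mathbb P_1,\dots,\mathbb P_M$ probability measures with strictly positive densities $p_1,\dots,p_M$ w.r.t. $\mu$, and $\varphi\ge0$ a measurable weight with $\varphi(x_1^n)=\prod_{k=1}^n\varphi(x_k)$, $p_i(x_1^n)=\prod_{k=1}^np_i(x_k)$. Weighted affinity $\rho^{\mathrm w}_\alpha(p_i,p_j)=\int\varphi\,p_i^\alpha p_j^{1-\alpha}\,\mathrm d\mu$; weighted Chernoff information $D_C^{\mathrm w}(\mathbb P_i,\mathbb P_j)=\max_{\alpha\in[0,1]}[-\ln\rho^{\mathrm w}_\alpha(p_i,p_j)]$. For measurable $\delta_n:\mathcal X^n\to\{1,\dots,M\}$ let $L_{i,n}(\delta_n)=\mathbb E_{\mathbb P_i^{\otimes n}}[\varphi(X_1^n)\mathbf 1\{\delta_n(X_1^n)\ne i\}]$, $L_{n,M}(\delta_n)=\sum_iL_{i,n}(\delta_n)$, $L^*_{n,M}=\inf_{\delta_n}L_{n,M}(\delta_n)$.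 *)

theory Defs
  imports "HOL-Probability.Probability"
begin

definition w_affinity ::
  "'a measure \<Rightarrow> ('a \<Rightarrow> real) \<Rightarrow> ('a \<Rightarrow> real) \<Rightarrow> ('a \<Rightarrow> real) \<Rightarrow> real \<Rightarrow> ennreal" where
  "w_affinity \<mu> \<phi> p q \<alpha> =
     (\<integral>\<^sup>+ x. ennreal (\<phi> x * p x powr \<alpha> * q x powr (1 - \<alpha>)) \<partial>\<mu>)"

text \<open>Weighted Chernoff information: max over alpha in [0,1] of - ln rho_alpha
  (written as a supremum, which is attained under the standing assumptions).\<close>
definition w_chernoff ::
  "'a measure \<Rightarrow> ('a \<Rightarrow> real) \<Rightarrow> ('a \<Rightarrow> real) \<Rightarrow> ('a \<Rightarrow> real) \<Rightarrow> real" where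
  "w_chernoff \<mu> \<phi> p q = (SUP \<alpha>\<in>{0..1}. - ln (enn2real (w_affinity \<mu> \<phi> p q \<alpha>)))"

text \<open>Points of X^n are functions nat => 'a restricted to {..<n};
  the n-fold product of P_i is the product of the density measures.\<close>
definition weighted_loss ::
  "'a measure \<Rightarrow> ('a \<Rightarrow> real) \<Rightarrow> (nat \<Rightarrow> 'a \<Rightarrow> real) \<Rightarrow> nat \<Rightarrow> ((nat \<Rightarrow> 'a) \<Rightarrow> nat) \<Rightarrow> nat \<Rightarrow> ennreal" where
  "weighted_loss \<mu> \<phi> p n \<delta> i =
     (\<integral>\<^sup>+ x. ennreal (\<Prod>k<n. \<phi> (x k)) * indicator {y. \<delta> y \<noteq> i} x
        \<partial>(PiM {..<n} (\<lambda>_. density \<mu> (\<lambda>z. ennreal (p i z)))))"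

definition total_loss ::
  "'a measure \<Rightarrow> ('a \<Rightarrow> real) \<Rightarrow> (nat \<Rightarrow> 'a \<Rightarrow> real) \<Rightarrow> nat \<Rightarrow> nat \<Rightarrow> ((nat \<Rightarrow> 'a) \<Rightarrow> nat) \<Rightarrow> ennreal" where
  "total_loss \<mu> \<phi> p M n \<delta> = (\<Sum>i=1..M. weighted_loss \<mu> \<phi> p n \<delta> i)"

definition opt_loss ::
  "'a measure \<Rightarrow> ('a \<Rightarrow> real) \<Rightarrow> (nat \<Rightarrow> 'a \<Rightarrow> real) \<Rightarrow> nat \<Rightarrow> nat \<Rightarrow> ennreal" where
  "opt_loss \<mu> \<phi> p M n =
     (INF \<delta>\<in>(PiM {..<n} (\<lambda>_. \<mu>) \<rightarrow>\<^sub>M count_space {1..M}). total_loss \<mu> \<phi> p M n \<delta>)"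

end

theory Submission
  imports Defs
begin

text \<open>
  Upper bound: the maximum-likelihood rule errs under hypothesis \<open>i\<close> only where
  \<open>p\<^sub>i\<^sup>n \<le> p\<^sub>j\<^sup>n\<close> for some \<open>j \<noteq> i\<close>, and there
  \<open>p\<^sub>i\<^sup>n \<le> (p\<^sub>i\<^sup>n)\<^sup>\<alpha> (p\<^sub>j\<^sup>n)\<^sup>1\<^sup>-\<^sup>\<alpha>\<close>,
  whose weighted integral is \<open>\<rho>\<^sub>\<alpha>(p\<^sub>i, p\<^sub>j)\<^sup>n\<close>; choosing \<open>\<alpha>\<close> well and
  summing over all pairs gives \<open>L\<^sup>*\<^sub>n \<le> M\<^sup>2 exp (- n (C - \<epsilon>))\<close>.

  Lower bound: every rule loses at least \<open>\<integral> \<phi>\<^sup>n min (p\<^sub>i\<^sup>n, p\<^sub>j\<^sup>n)\<close> for the pair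
  \<open>(i, j)\<close> attaining \<open>C\<close>. Truncate the log-likelihood ratio \<open>L = ln (p\<^sub>i / p\<^sub>j)\<close> to
  \<open>\<bar>L\<bar> \<le> m\<close>; by monotone convergence and compactness of \<open>[0, 1]\<close> the truncated affinities
  exceed \<open>exp (- C - \<epsilon>)\<close> uniformly in \<open>\<alpha>\<close> for one \<open>m\<close>. Tilt the truncated measure
  \<open>\<phi> p\<^sub>j d\<mu>\<close> by \<open>exp (\<alpha>\<^sup>* L)\<close>, where \<open>\<alpha>\<^sup>*\<close> minimises the truncated affinity
  on \<open>[0, 1]\<close>: the first-order conditions at \<open>\<alpha>\<^sup>*\<close> give the tilted mean of \<open>L\<close> the sign for
  which \<open>min (p\<^sub>i\<^sup>n, p\<^sub>j\<^sup>n)\<close> is at least \<open>exp (- n \<epsilon>)\<close> times the tilted density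
  wherever \<open>\<Sum> L\<close> is within \<open>n \<epsilon>\<close> of its mean, and by Hoeffding's inequality this has
  tilted probability at least \<open>1/2\<close>.
\<close>

section \<open>Products of densities and Hoeffding's inequality\<close>

lemma PiM_density_eq_density_PiM:
  fixes g :: "'a \<Rightarrow> real"
  assumes "sigma_finite_measure \<mu>" and "finite I"
    and g[measurable]: "g \<in> borel_measurable \<mu>" and g_nonneg: "\<And>x. g x \<ge> 0"
  shows "PiM I (\<lambda>_. density \<mu> (\<lambda>x. ennreal (g x))) =
         density (PiM I (\<lambda>_. \<mu>)) (\<lambda>x. ennreal (\<Prod>i\<in>I. g (x i)))"
proof -
  interpret \<mu>: sigma_finite_measure \<mu> by fact
  interpret D: product_sigma_finite "\<lambda>_. density \<mu> (\<lambda>x. ennreal (g x))"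
    unfolding product_sigma_finite_def
    by (auto simp: \<mu>.sigma_finite_iff_density_finite)
  interpret U: product_sigma_finite "\<lambda>_. \<mu>"
    by (simp add: product_sigma_finite_def \<mu>.sigma_finite_measure_axioms)
  show ?thesis
  proof (rule D.PiM_eqI[symmetric, OF \<open>finite I\<close>])
    show "sets (density (PiM I (\<lambda>_. \<mu>)) (\<lambda>x. ennreal (\<Prod>i\<in>I. g (x i)))) =
      sets (PiM I (\<lambda>_. density \<mu> (\<lambda>x. ennreal (g x))))"
      by (subst sets_density, rule sets_PiM_cong) auto
    fix A assume "\<And>i. i \<in> I \<Longrightarrow> A i \<in> sets (density \<mu> (\<lambda>x. ennreal (g x)))"
    then have A: "\<And>i. i \<in> I \<Longrightarrow> A i \<in> sets \<mu>" by simp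
    have "emeasure (density (PiM I (\<lambda>_. \<mu>)) (\<lambda>x. ennreal (\<Prod>i\<in>I. g (x i)))) (PiE I A)
        = (\<integral>\<^sup>+ x. ennreal (\<Prod>i\<in>I. g (x i)) * indicator (PiE I A) x \<partial>PiM I (\<lambda>_. \<mu>))"
      using A \<open>finite I\<close> by (subst emeasure_density) (measurable, auto intro!: sets_PiM_I_finite)
    also have "\<dots> = (\<integral>\<^sup>+ x. (\<Prod>i\<in>I. ennreal (g (x i)) * indicator (A i) (x i)) \<partial>PiM I (\<lambda>_. \<mu>))"
      by (intro nn_integral_cong)
         (auto simp: \<open>finite I\<close> prod.distrib g_nonneg prod_ennreal[symmetric] indicator_def
           PiE_iff space_PiM prod_nonneg)
    also have "\<dots> = (\<Prod>i\<in>I. \<integral>\<^sup>+ y. ennreal (g y) * indicator (A i) y \<partial>\<mu>)"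
      using A by (subst U.product_nn_integral_prod) (auto simp: \<open>finite I\<close>)
    also have "\<dots> = (\<Prod>i\<in>I. emeasure (density \<mu> (\<lambda>x. ennreal (g x))) (A i))"
      using A by (intro prod.cong refl) (simp add: emeasure_density)
    finally show "emeasure (density (PiM I (\<lambda>_. \<mu>)) (\<lambda>x. ennreal (\<Prod>i\<in>I. g (x i)))) (PiE I A)
        = (\<Prod>i\<in>I. emeasure (density \<mu> (\<lambda>x. ennreal (g x))) (A i))" .
  qed
qed

lemma product_prob_space_const:
  assumes "prob_space Q"
  shows "product_prob_space (\<lambda>_. Q)"
  using assms
  by (simp add: product_prob_space_def product_sigma_finite_def prob_space_imp_sigma_finite
      product_prob_space_axioms_def)

lemma indep_vars_PiM_coordinates:
  assumes Q: "prob_space Q" and "I \<noteq> {}"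
  shows "prob_space.indep_vars (PiM I (\<lambda>_. Q)) (\<lambda>_. Q) (\<lambda>k x. x k) I"
proof -
  interpret PQ: prob_space "PiM I (\<lambda>_. Q)" by (rule prob_space_PiM) (rule Q)
  show ?thesis
  proof (subst PQ.indep_vars_iff_distr_eq_PiM'[OF \<open>I \<noteq> {}\<close>])
    have "distr (PiM I (\<lambda>_. Q)) (PiM I (\<lambda>_. Q)) (\<lambda>x. restrict (\<lambda>i. x i) I) =
          distr (PiM I (\<lambda>_. Q)) (PiM I (\<lambda>_. Q)) (\<lambda>x. x)"
      by (rule distr_cong) (auto simp: space_PiM PiE_iff restrict_def extensional_def)
    also have "\<dots> = PiM I (\<lambda>i. distr (PiM I (\<lambda>_. Q)) Q (\<lambda>x. x i))"
      by (auto intro!: PiM_cong simp: product_prob_space.PiM_component[OF product_prob_space_const[OF Q]])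
    finally show "distr (PiM I (\<lambda>_. Q)) (PiM I (\<lambda>i. Q)) (\<lambda>x. restrict (\<lambda>i. x i) I) =
          PiM I (\<lambda>i. distr (PiM I (\<lambda>_. Q)) Q (\<lambda>x. x i))" .
  qed simp
qed

lemma PiM_sum_deviation_le:
  fixes s :: "'a \<Rightarrow> real"
  assumes Q: "prob_space Q" and s[measurable]: "s \<in> borel_measurable Q"
    and bounded: "AE x in Q. \<bar>s x\<bar> \<le> B" and "0 \<le> e" and "n > 0"
  shows "measure (PiM {..<n} (\<lambda>_. Q))
           {x \<in> space (PiM {..<n} (\<lambda>_. Q)). real n * e \<le> \<bar>(\<Sum>k<n. s (x k)) - real n * (\<integral>y. s y \<partial>Q)\<bar>}
         \<le> 2 * exp (- (e\<^sup>2 / (2 * (\<bar>B\<bar> + 1)\<^sup>2))) ^ n"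
proof -
  define \<beta> where "\<beta> = \<bar>B\<bar> + 1"
  have "\<beta> > 0"
    by (simp add: \<beta>_def add_nonneg_pos)
  interpret PQ: prob_space "PiM {..<n} (\<lambda>_. Q)"
    by (rule prob_space_PiM) (rule Q)
  have PQ_Q: "distr (PiM {..<n} (\<lambda>_. Q)) Q (\<lambda>x. x k) = Q" if "k < n" for k
    using that by (simp add: product_prob_space.PiM_component[OF product_prob_space_const[OF Q]])
  have expectation: "(\<integral>x. s (x k) \<partial>PiM {..<n} (\<lambda>_. Q)) = (\<integral>y. s y \<partial>Q)" if "k < n" for k
    using that by (subst PQ_Q[OF that, symmetric], subst integral_distr) auto
  have "AE x in Q. s x \<in> {- \<beta>..\<beta>}"
    using bounded by eventually_elim (auto simp: \<beta>_def)
  then have AE_bounded: "AE x in PiM {..<n} (\<lambda>_. Q). s (x k) \<in> {- \<beta>..\<beta>}" if "k < n" for k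
    using that by (intro product_prob_space.AE_component[OF product_prob_space_const[OF Q]]) auto
  interpret Hoeffding_ineq "PiM {..<n} (\<lambda>_. Q)" "{..<n}" "\<lambda>k x. s (x k)"
    "\<lambda>_. - \<beta>" "\<lambda>_. \<beta>" "\<Sum>k<n. \<integral>x. s (x k) \<partial>PiM {..<n} (\<lambda>_. Q)"
    using PQ.indep_vars_compose2[of "\<lambda>_. Q" "\<lambda>k x. x k" "{..<n}" "\<lambda>_. s" "\<lambda>_. borel"]
      indep_vars_PiM_coordinates[OF Q, of "{..<n}"] \<open>n > 0\<close> AE_bounded
    by unfold_locales auto
  have width: "(\<Sum>k<n. (\<beta> - - \<beta>)\<^sup>2) = real n * (2 * \<beta>)\<^sup>2"
    by simp
  have "-2 * (real n * e)\<^sup>2 / (real n * (2 * \<beta>)\<^sup>2) = real n * - (e\<^sup>2 / (2 * \<beta>\<^sup>2))"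
    using \<open>n > 0\<close> \<open>\<beta> > 0\<close> by (simp add: power2_eq_square field_simps)
  then have bound: "2 * exp (-2 * (real n * e)\<^sup>2 / (\<Sum>k<n. (\<beta> - - \<beta>)\<^sup>2)) =
      2 * exp (- (e\<^sup>2 / (2 * (\<bar>B\<bar> + 1)\<^sup>2))) ^ n"
    unfolding width \<beta>_def by (simp flip: exp_of_nat_mult)
  have "0 < real n * \<beta>\<^sup>2"
    using \<open>n > 0\<close> \<open>\<beta> > 0\<close> by simp
  then show ?thesis
    using Hoeffding_ineq_abs_ge[of "real n * e"] \<open>0 \<le> e\<close>
    unfolding bound by (simp add: expectation)
qed

lemma PiM_sum_deviation_tendsto_0:
  fixes s :: "'a \<Rightarrow> real"
  assumes "prob_space Q" and "s \<in> borel_measurable Q" and "AE x in Q. \<bar>s x\<bar> \<le> B" and "e > 0"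
  shows "(\<lambda>n. measure (PiM {..<n} (\<lambda>_. Q))
           {x \<in> space (PiM {..<n} (\<lambda>_. Q)). real n * e \<le> \<bar>(\<Sum>k<n. s (x k)) - real n * (\<integral>y. s y \<partial>Q)\<bar>})
         \<longlonglongrightarrow> 0"
proof (rule Lim_null_comparison)
  define r where "r = exp (- (e\<^sup>2 / (2 * (\<bar>B\<bar> + 1)\<^sup>2)))"
  have "r < 1"
    using \<open>e > 0\<close> by (simp add: r_def add_nonneg_pos)
  then show "(\<lambda>n. 2 * r ^ n) \<longlonglongrightarrow> 0"
    by (intro tendsto_mult_right_zero LIMSEQ_power_zero) (auto simp: r_def)
  show "\<forall>\<^sub>F n in sequentially. norm (measure (PiM {..<n} (\<lambda>_. Q))
           {x \<in> space (PiM {..<n} (\<lambda>_. Q)). real n * e \<le> \<bar>(\<Sum>k<n. s (x k)) - real n * (\<integral>y. s y \<partial>Q)\<bar>})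
         \<le> 2 * r ^ n"
    using eventually_gt_at_top[of 0]
    by eventually_elim (use PiM_sum_deviation_le[OF assms(1-3)] \<open>e > 0\<close> in \<open>simp add: r_def\<close>)
qed

section \<open>Elementary real analysis\<close>

lemma exp_le_one_plus_quadratic:
  fixes y :: real
  assumes "\<bar>y\<bar> \<le> 1"
  shows "exp y \<le> 1 + y + y\<^sup>2"
proof (cases "0 \<le> y")
  case True
  then show ?thesis
    using exp_bound assms by simp
next
  case False
  obtain t where "exp y = (\<Sum>m<3. y ^ m / fact m) + exp t / fact 3 * y ^ 3"
    using Maclaurin_exp_le by blast
  moreover have "exp t / fact 3 * y ^ 3 \<le> 0"
    using False by (intro mult_nonneg_nonpos) (auto simp: less_imp_le)
  ultimately have "exp y \<le> 1 + y + y\<^sup>2 / 2"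
    by (simp add: numeral_3_eq_3 power2_eq_square)
  then show ?thesis
    using zero_le_power2[of y] by linarith
qed

lemma DERIV_of_quadratic_remainder:
  fixes f :: "real \<Rightarrow> real"
  assumes "d > 0" and remainder: "\<And>h. \<bar>h\<bar> < d \<Longrightarrow> \<bar>f (x + h) - f x - h * l\<bar> \<le> K * h\<^sup>2"
  shows "(f has_real_derivative l) (at x)"
  unfolding DERIV_def
proof (rule LIM_zero_cancel, rule Lim_null_comparison)
  show "((\<lambda>h. K * \<bar>h\<bar>) \<longlongrightarrow> 0) (at 0)"
    by (intro tendsto_mult_right_zero tendsto_rabs_zero tendsto_ident_at)
  have "norm ((f (x + h) - f x) / h - l) \<le> K * \<bar>h\<bar>" if "h \<noteq> 0" "\<bar>h\<bar> < d" for h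
  proof -
    have "(f (x + h) - f x) / h - l = (f (x + h) - f x - h * l) / h"
      using \<open>h \<noteq> 0\<close> by (simp add: field_simps)
    also have "\<bar>\<dots>\<bar> \<le> K * h\<^sup>2 / \<bar>h\<bar>"
      unfolding abs_divide using remainder[OF \<open>\<bar>h\<bar> < d\<close>] by (intro divide_right_mono) auto
    also have "\<dots> = K * \<bar>h\<bar>"
      using \<open>h \<noteq> 0\<close> by (simp add: power2_eq_square abs_mult_self_eq[symmetric, of h] del: abs_mult_self_eq)
    finally show ?thesis by simp
  qed
  then show "\<forall>\<^sub>F h in at 0. norm ((f (x + h) - f x) / h - l) \<le> K * \<bar>h\<bar>"
    unfolding eventually_at using \<open>d > 0\<close> by (auto intro!: exI[of _ d])
qed

lemma exp_neg_le_exp_tilt_min: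
  fixes a c m e S :: real
  assumes "a \<in> {0..1}" and "0 \<le> m" and "0 \<le> (1 - a) * c" and "a * c \<le> 0"
    and close: "\<bar>S - m * c\<bar> \<le> m * e"
  shows "exp (- m * e) \<le> exp (- a * S) * min (exp S) 1"
proof -
  have "\<bar>a * (S - m * c)\<bar> \<le> \<bar>S - m * c\<bar>" "\<bar>(1 - a) * (S - m * c)\<bar> \<le> \<bar>S - m * c\<bar>"
    using \<open>a \<in> {0..1}\<close> by (auto simp: abs_mult mult_left_le_one_le)
  moreover have "a * (m * c) \<le> 0" "0 \<le> (1 - a) * (m * c)"
    using \<open>0 \<le> m\<close> \<open>a * c \<le> 0\<close> \<open>0 \<le> (1 - a) * c\<close>
    by (simp_all add: mult.left_commute[of a m] mult.left_commute[of "1 - a" m]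
        mult_nonneg_nonpos)
  ultimately have "a * S \<le> m * e" "- (m * e) \<le> (1 - a) * S"
    using close by (auto simp: algebra_simps abs_le_iff)
  show ?thesis
  proof (cases "0 \<le> S")
    case True
    then show ?thesis
      using \<open>a * S \<le> m * e\<close> by simp
  next
    case False
    then have "exp (- a * S) * min (exp S) 1 = exp ((1 - a) * S)"
      by (simp add: algebra_simps flip: exp_add)
    then show ?thesis
      using \<open>- (m * e) \<le> (1 - a) * S\<close> by simp
  qed
qed

lemma compact_incseq_exceeds_uniformly:
  fixes f :: "nat \<Rightarrow> 'a::topological_space \<Rightarrow> real"
  assumes "compact K" and cont: "\<And>m. continuous_on K (f m)"
    and mono: "\<And>x m m'. x \<in> K \<Longrightarrow> m \<le> m' \<Longrightarrow> f m x \<le> f m' x"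
    and exceeds: "\<And>x. x \<in> K \<Longrightarrow> \<exists>m. c < f m x"
  shows "\<exists>m. \<forall>x\<in>K. c < f m x"
proof -
  have "\<forall>m. \<exists>V. open V \<and> V \<inter> K = f m -` {c<..} \<inter> K"
    using cont by (simp add: continuous_on_open_invariant)
  from choice[OF this] obtain V where V: "\<And>m. open (V m)" "\<And>m. V m \<inter> K = f m -` {c<..} \<inter> K"
    by blast
  have "K \<subseteq> (\<Union>m\<in>UNIV. V m)"
    using exceeds V(2) by blast
  then obtain C where "finite C" and cover: "K \<subseteq> (\<Union>m\<in>C. V m)"
    by (rule compactE_image[OF \<open>compact K\<close> V(1)]) blast
  show ?thesis
  proof (intro exI ballI)
    fix x assume "x \<in> K"
    with cover obtain m where "m \<in> C" "x \<in> V m"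
      by blast
    then have "c < f m x"
      using V(2) \<open>x \<in> K\<close> by blast
    also have "\<dots> \<le> f (Max (insert 0 C)) x"
      using \<open>finite C\<close> \<open>m \<in> C\<close> \<open>x \<in> K\<close> by (intro mono) auto
    finally show "c < f (Max (insert 0 C)) x" .
  qed
qed

lemma eventually_le_exp_linear:
  assumes "c > 0"
  shows "\<forall>\<^sub>F n in sequentially. K \<le> exp (c * real n)"
proof -
  have "filterlim (\<lambda>n. c * real n) at_top sequentially"
    using assms by (intro filterlim_tendsto_pos_mult_at_top[OF tendsto_const] filterlim_real_sequentially)
  then have "filterlim (\<lambda>n. exp (c * real n)) at_top sequentially"
    by (rule filterlim_compose[OF exp_at_top])
  then show ?thesis
    by (simp add: filterlim_at_top)
qed

lemma neg_ln_div_le_of_exp_le: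
  assumes "exp (- real n * c) \<le> v" and "n > 0"
  shows "- ln v / real n \<le> c"
proof -
  have "- ln v \<le> real n * c"
    using ln_mono[OF assms(1) exp_gt_zero] by simp
  then have "- ln v / real n \<le> real n * c / real n"
    by (intro divide_right_mono) auto
  then show ?thesis
    using \<open>n > 0\<close> by simp
qed

lemma neg_ln_div_ge_of_le_exp:
  assumes "0 < v" and "v \<le> K * exp (- real n * c)" and "n > 0"
  shows "c - ln K / real n \<le> - ln v / real n"
proof -
  have "0 < K"
    using assms(1,2) by (smt (verit) exp_gt_zero mult_nonpos_nonneg)
  then have "real n * c - ln K \<le> - ln v"
    using ln_mono[OF assms(2,1)] by (simp add: ln_mult)
  then have "(real n * c - ln K) / real n \<le> - ln v / real n"
    by (intro divide_right_mono) auto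
  then show ?thesis
    using \<open>n > 0\<close> by (simp add: diff_divide_distrib)
qed

lemma tendsto_neg_ln_div_of_exp_bounds:
  fixes v :: "nat \<Rightarrow> real"
  assumes lower: "\<And>e. e > 0 \<Longrightarrow> \<forall>\<^sub>F n in sequentially. exp (- real n * (C + e)) \<le> v n"
    and upper: "\<And>e. e > 0 \<Longrightarrow> \<forall>\<^sub>F n in sequentially. v n \<le> K * exp (- real n * (C - e))"
  shows "(\<lambda>n. - ln (v n) / real n) \<longlonglongrightarrow> C"
proof (rule order_tendstoI)
  fix y assume "C < y"
  then have "(y - C) / 2 > 0"
    by simp
  from lower[OF this] eventually_gt_at_top[of 0]
  show "\<forall>\<^sub>F n in sequentially. - ln (v n) / real n < y"
  proof eventually_elim
    case (elim n)
    then have "- ln (v n) / real n \<le> C + (y - C) / 2"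
      by (rule neg_ln_div_le_of_exp_le)
    also have "C + (y - C) / 2 < y"
      using \<open>C < y\<close> by (simp add: field_simps)
    finally show ?case .
  qed
next
  fix y assume "y < C"
  define e where "e = (C - y) / 2"
  have "e > 0"
    using \<open>y < C\<close> by (simp add: e_def)
  have "\<forall>\<^sub>F n in sequentially. ln K / real n < e"
    using \<open>e > 0\<close> by (intro order_tendstoD(2)[OF lim_const_over_n])
  with lower[OF \<open>e > 0\<close>] upper[OF \<open>e > 0\<close>] eventually_gt_at_top[of 0]
  show "\<forall>\<^sub>F n in sequentially. y < - ln (v n) / real n"
  proof eventually_elim
    case (elim n)
    have "0 < v n"
      using elim(1) exp_gt_zero less_le_trans by blast
    have "y < C - e - ln K / real n"
      using elim(4) by (simp add: e_def field_simps)
    also have "\<dots> \<le> - ln (v n) / real n"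
      using \<open>0 < v n\<close> elim(2,3) by (rule neg_ln_div_ge_of_le_exp)
    finally show ?case .
  qed
qed

section \<open>Exponential tilting of a bounded statistic\<close>

locale bounded_mgf = finite_measure \<nu> for \<nu> :: "'a measure" +
  fixes s :: "'a \<Rightarrow> real" and B :: real
  assumes s_measurable[measurable]: "s \<in> borel_measurable \<nu>"
    and abs_s_le: "\<And>x. x \<in> space \<nu> \<Longrightarrow> \<bar>s x\<bar> \<le> B"
begin

definition mgf :: "real \<Rightarrow> real" where
  "mgf t = (\<integral>x. exp (t * s x) \<partial>\<nu>)"

definition mgf' :: "real \<Rightarrow> real" where
  "mgf' t = (\<integral>x. s x * exp (t * s x) \<partial>\<nu>)"

lemma exp_scaled_le: "x \<in> space \<nu> \<Longrightarrow> exp (t * s x) \<le> exp (\<bar>t\<bar> * B)"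
  using abs_s_le[of x] abs_mult[of t "s x"] mult_left_mono[of "\<bar>s x\<bar>" B "\<bar>t\<bar>"] by simp

lemma integrable_exp_scaled: "integrable \<nu> (\<lambda>x. exp (t * s x))"
  using exp_scaled_le by (intro integrable_const_bound[where B = "exp (\<bar>t\<bar> * B)"]) auto

lemma integrable_s_exp_scaled: "integrable \<nu> (\<lambda>x. s x * exp (t * s x))"
proof (rule integrable_const_bound[where B = "B * exp (\<bar>t\<bar> * B)"])
  show "AE x in \<nu>. norm (s x * exp (t * s x)) \<le> B * exp (\<bar>t\<bar> * B)"
  proof (intro AE_I2)
    fix x assume "x \<in> space \<nu>"
    with abs_s_le[of x] exp_scaled_le[of x t]
    show "norm (s x * exp (t * s x)) \<le> B * exp (\<bar>t\<bar> * B)"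
      by (simp add: abs_mult mult_mono)
  qed
qed simp

lemma mgf_nonneg: "0 \<le> mgf t"
  unfolding mgf_def by simp

lemma mgf_ge: "exp (- \<bar>t\<bar> * B) * measure \<nu> (space \<nu>) \<le> mgf t"
proof -
  have "exp (- \<bar>t\<bar> * B) \<le> exp (t * s x)" if "x \<in> space \<nu>" for x
    using abs_s_le[OF that] abs_mult[of t "s x"] mult_left_mono[of "\<bar>s x\<bar>" B "\<bar>t\<bar>"]
    by (simp add: abs_le_iff)
  then have "(\<integral>x. exp (- \<bar>t\<bar> * B) \<partial>\<nu>) \<le> mgf t"
    unfolding mgf_def by (intro integral_mono integrable_exp_scaled) auto
  then show ?thesis
    by (simp add: mult.commute)
qed

lemma mgf_remainder:
  assumes "\<bar>h\<bar> * B \<le> 1"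
  shows "\<bar>mgf (t + h) - mgf t - h * mgf' t\<bar> \<le> B\<^sup>2 * mgf t * h\<^sup>2"
proof -
  define r where "r x = exp (t * s x) * (exp (h * s x) - 1 - h * s x)" for x
  have r_bounds: "0 \<le> r x \<and> r x \<le> B\<^sup>2 * h\<^sup>2 * exp (t * s x)" if "x \<in> space \<nu>" for x
  proof -
    have "\<bar>h * s x\<bar> \<le> \<bar>h\<bar> * B"
      using abs_s_le[OF that] by (simp add: abs_mult mult_left_mono)
    then have "exp (h * s x) \<le> 1 + h * s x + (h * s x)\<^sup>2"
      using assms by (intro exp_le_one_plus_quadratic) linarith
    moreover have "(h * s x)\<^sup>2 \<le> (\<bar>h\<bar> * B)\<^sup>2"
      using \<open>\<bar>h * s x\<bar> \<le> \<bar>h\<bar> * B\<close> by (metis abs_ge_zero power2_abs power_mono)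
    ultimately have "exp (h * s x) - 1 - h * s x \<le> B\<^sup>2 * h\<^sup>2"
      by (simp add: power_mult_distrib mult.commute)
    moreover have "0 \<le> exp (h * s x) - 1 - h * s x"
      using exp_ge_add_one_self[of "h * s x"] by linarith
    ultimately show ?thesis
      unfolding r_def by (simp add: mult_left_mono mult.commute)
  qed
  have r_eq: "r x = exp ((t + h) * s x) - exp (t * s x) - h * (s x * exp (t * s x))" for x
    by (simp add: r_def algebra_simps exp_add)
  have integrable_r: "integrable \<nu> r"
    unfolding r_eq[abs_def] using integrable_exp_scaled integrable_s_exp_scaled by simp
  have "mgf (t + h) - mgf t - h * mgf' t = (\<integral>x. r x \<partial>\<nu>)"
    unfolding r_eq mgf_def mgf'_def using integrable_exp_scaled integrable_s_exp_scaled by simp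
  moreover have "0 \<le> (\<integral>x. r x \<partial>\<nu>)"
    using r_bounds by (intro integral_nonneg_AE AE_I2) auto
  moreover have "(\<integral>x. r x \<partial>\<nu>) \<le> B\<^sup>2 * mgf t * h\<^sup>2"
  proof -
    have "(\<integral>x. r x \<partial>\<nu>) \<le> (\<integral>x. B\<^sup>2 * h\<^sup>2 * exp (t * s x) \<partial>\<nu>)"
      using r_bounds integrable_r integrable_exp_scaled by (intro integral_mono) auto
    then show ?thesis
      by (simp add: mgf_def mult_ac)
  qed
  ultimately show ?thesis
    by simp
qed

lemma mgf_has_real_derivative: "(mgf has_real_derivative mgf' t) (at t)"
proof (rule DERIV_of_quadratic_remainder[where d = "1 / (\<bar>B\<bar> + 1)" and K = "B\<^sup>2 * mgf t"])
  show "1 / (\<bar>B\<bar> + 1) > 0"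
    by (simp add: add_nonneg_pos)
  fix h :: real
  assume "\<bar>h\<bar> < 1 / (\<bar>B\<bar> + 1)"
  then have "\<bar>h\<bar> * (\<bar>B\<bar> + 1) \<le> 1"
    by (simp add: pos_less_divide_eq add_nonneg_pos less_imp_le)
  moreover have "\<bar>h\<bar> * B \<le> \<bar>h\<bar> * (\<bar>B\<bar> + 1)"
    by (intro mult_left_mono) auto
  ultimately show "\<bar>mgf (t + h) - mgf t - h * mgf' t\<bar> \<le> B\<^sup>2 * mgf t * h\<^sup>2"
    by (intro mgf_remainder) linarith
qed

lemma continuous_on_mgf: "continuous_on A mgf"
  using mgf_has_real_derivative
  by (intro continuous_at_imp_continuous_on ballI DERIV_isCont)

lemma mgf'_sign_at_min:
  assumes "a \<in> {0..1}" and min: "\<And>b. b \<in> {0..1} \<Longrightarrow> mgf a \<le> mgf b"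
  shows "0 \<le> (1 - a) * mgf' a" and "a * mgf' a \<le> 0"
proof -
  have "0 \<le> mgf' a" if "a < 1"
  proof (rule ccontr)
    assume "\<not> 0 \<le> mgf' a"
    then have "mgf' a < 0"
      by simp
    from DERIV_neg_dec_right[OF mgf_has_real_derivative this]
    obtain d where "d > 0" and decr: "\<And>h. 0 < h \<Longrightarrow> h < d \<Longrightarrow> mgf (a + h) < mgf a"
      by blast
    define h where "h = min (d / 2) (1 - a)"
    have "0 < h" "h < d" "a + h \<in> {0..1}"
      using \<open>d > 0\<close> \<open>a < 1\<close> \<open>a \<in> {0..1}\<close> by (auto simp: h_def)
    with decr min[of "a + h"] show False
      by fastforce
  qed
  then show "0 \<le> (1 - a) * mgf' a"
    using \<open>a \<in> {0..1}\<close> by (cases "a < 1") auto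
  have "mgf' a \<le> 0" if "0 < a"
  proof (rule ccontr)
    assume "\<not> mgf' a \<le> 0"
    then have "0 < mgf' a"
      by simp
    from DERIV_pos_inc_left[OF mgf_has_real_derivative this]
    obtain d where "d > 0" and decr: "\<And>h. 0 < h \<Longrightarrow> h < d \<Longrightarrow> mgf (a - h) < mgf a"
      by blast
    define h where "h = min (d / 2) a"
    have "0 < h" "h < d" "a - h \<in> {0..1}"
      using \<open>d > 0\<close> \<open>0 < a\<close> \<open>a \<in> {0..1}\<close> by (auto simp: h_def)
    with decr min[of "a - h"] show False
      by fastforce
  qed
  then show "a * mgf' a \<le> 0"
    using \<open>a \<in> {0..1}\<close> by (cases "0 < a") (auto simp: mult_nonneg_nonpos)
qed

definition tilted :: "real \<Rightarrow> 'a measure" where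
  "tilted a = density \<nu> (\<lambda>x. ennreal (exp (a * s x) / mgf a))"

lemma sets_tilted[measurable_cong]: "sets (tilted a) = sets \<nu>"
  by (simp add: tilted_def)

lemma prob_space_tilted:
  assumes "0 < mgf a"
  shows "prob_space (tilted a)"
proof (rule prob_spaceI)
  have "emeasure (tilted a) (space (tilted a)) = (\<integral>\<^sup>+x. ennreal (exp (a * s x) / mgf a) \<partial>\<nu>)"
    unfolding tilted_def by (subst emeasure_density) (auto intro!: nn_integral_cong)
  also have "\<dots> = ennreal (\<integral>x. exp (a * s x) / mgf a \<partial>\<nu>)"
    using integrable_exp_scaled assms by (intro nn_integral_eq_integral) auto
  also have "(\<integral>x. exp (a * s x) / mgf a \<partial>\<nu>) = 1"
    using assms by (simp add: mgf_def)
  finally show "emeasure (tilted a) (space (tilted a)) = 1"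
    by simp
qed

lemma integral_tilted:
  assumes "0 < mgf a"
  shows "(\<integral>x. s x \<partial>tilted a) = mgf' a / mgf a"
proof -
  have "(\<integral>x. s x \<partial>tilted a) = (\<integral>x. exp (a * s x) / mgf a * s x \<partial>\<nu>)"
    unfolding tilted_def using assms by (subst integral_density) auto
  then show ?thesis
    by (simp add: mgf'_def mult.commute)
qed

lemma PiM_tilted:
  "PiM {..<n} (\<lambda>_. tilted a) =
   density (PiM {..<n} (\<lambda>_. \<nu>)) (\<lambda>x. ennreal (exp (a * (\<Sum>k<n. s (x k))) / mgf a ^ n))"
proof -
  have "PiM {..<n} (\<lambda>_. tilted a) =
    density (PiM {..<n} (\<lambda>_. \<nu>)) (\<lambda>x. ennreal (\<Prod>k<n. exp (a * s (x k)) / mgf a))"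
    unfolding tilted_def
    by (intro PiM_density_eq_density_PiM) (auto simp: sigma_finite_measure_axioms mgf_nonneg)
  then show ?thesis
    by (simp add: prod_dividef exp_sum sum_distrib_left)
qed

lemma nn_integral_PiM_tilted:
  assumes "0 < mgf a" and [measurable]: "f \<in> borel_measurable (PiM {..<n} (\<lambda>_. \<nu>))"
  shows "(\<integral>\<^sup>+x. f x \<partial>PiM {..<n} (\<lambda>_. \<nu>)) =
    (\<integral>\<^sup>+x. ennreal (mgf a ^ n * exp (- a * (\<Sum>k<n. s (x k)))) * f x \<partial>PiM {..<n} (\<lambda>_. tilted a))"
proof -
  have "ennreal (exp (a * S) / mgf a ^ n) * (ennreal (mgf a ^ n * exp (- a * S)) * y) = y" for S y
  proof -
    have "exp (a * S) / mgf a ^ n * (mgf a ^ n * exp (- a * S)) = 1"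
      using assms(1) by (simp add: exp_minus)
    then show ?thesis
      using assms(1) by (simp add: mult.assoc[symmetric] ennreal_mult[symmetric])
  qed
  then show ?thesis
    unfolding PiM_tilted by (subst nn_integral_density) auto
qed

lemma eventually_tilted_mass_near_mean:
  assumes "0 < mgf a" and "e > 0"
  shows "\<forall>\<^sub>F n in sequentially. 1 / 2 \<le> measure (PiM {..<n} (\<lambda>_. tilted a))
           {x \<in> space (PiM {..<n} (\<lambda>_. tilted a)). \<bar>(\<Sum>k<n. s (x k)) - real n * (mgf' a / mgf a)\<bar> < real n * e}"
proof -
  have Q: "prob_space (tilted a)"
    using assms(1) by (rule prob_space_tilted)
  have "AE x in tilted a. \<bar>s x\<bar> \<le> B"
    by (intro AE_I2) (simp add: tilted_def abs_s_le)
  from PiM_sum_deviation_tendsto_0[OF Q _ this \<open>e > 0\<close>]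
  have "\<forall>\<^sub>F n in sequentially. measure (PiM {..<n} (\<lambda>_. tilted a))
     {x \<in> space (PiM {..<n} (\<lambda>_. tilted a)). real n * e \<le> \<bar>(\<Sum>k<n. s (x k)) - real n * (mgf' a / mgf a)\<bar>} < 1 / 2"
    by (intro order_tendstoD(2)) (auto simp: integral_tilted[OF \<open>0 < mgf a\<close>])
  then show ?thesis
  proof eventually_elim
    case (elim n)
    interpret Qn: prob_space "PiM {..<n} (\<lambda>_. tilted a)"
      by (rule prob_space_PiM) (rule Q)
    let ?far = "{x \<in> space (PiM {..<n} (\<lambda>_. tilted a)).
      real n * e \<le> \<bar>(\<Sum>k<n. s (x k)) - real n * (mgf' a / mgf a)\<bar>}"
    have "?far \<in> sets (PiM {..<n} (\<lambda>_. tilted a))"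
      by measurable
    moreover have "{x \<in> space (PiM {..<n} (\<lambda>_. tilted a)).
        \<bar>(\<Sum>k<n. s (x k)) - real n * (mgf' a / mgf a)\<bar> < real n * e} =
      space (PiM {..<n} (\<lambda>_. tilted a)) - ?far"
      by auto
    ultimately show ?case
      using Qn.prob_compl elim by simp
  qed
qed

text \<open>Tilting at the minimiser \<open>a\<close> centres \<open>S = \<Sum>k<n. s (x k)\<close> at \<open>n c\<close> with
  \<open>(1 - a) c \<ge> 0 \<ge> a c\<close>. Wherever \<open>S\<close> lies within \<open>n e\<close> of \<open>n c\<close> (tilted probability at
  least \<open>1/2\<close>), the tilted integrand \<open>exp (- a S) min (exp S) 1\<close> is at least \<open>exp (- n e)\<close>.\<close>
lemma PiM_min_exp_sum_lower_bound:
  assumes a: "a \<in> {0..1}" and minimal: "\<And>b. b \<in> {0..1} \<Longrightarrow> mgf a \<le> mgf b"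
    and "0 < mgf a" and "e > 0"
  shows "\<forall>\<^sub>F n in sequentially. ennreal (mgf a ^ n * exp (- real n * e) / 2) \<le>
           (\<integral>\<^sup>+x. ennreal (min (exp (\<Sum>k<n. s (x k))) 1) \<partial>PiM {..<n} (\<lambda>_. \<nu>))"
  using eventually_tilted_mass_near_mean[OF \<open>0 < mgf a\<close> \<open>e > 0\<close>]
proof eventually_elim
  case (elim n)
  define c where "c = mgf' a / mgf a"
  have "(1 - a) * c = (1 - a) * mgf' a / mgf a" "a * c = a * mgf' a / mgf a"
    by (simp_all add: c_def)
  then have "0 \<le> (1 - a) * c" "a * c \<le> 0"
    using mgf'_sign_at_min[OF a minimal] \<open>0 < mgf a\<close> by (simp_all add: divide_nonpos_pos)
  define S where "S x = (\<Sum>k<n. s (x k))" for x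
  define Qn where "Qn = PiM {..<n} (\<lambda>_. tilted a)"
  define E where "E = {x \<in> space Qn. \<bar>S x - real n * c\<bar> < real n * e}"
  interpret Qn: prob_space Qn
    unfolding Qn_def using \<open>0 < mgf a\<close> by (intro prob_space_PiM prob_space_tilted)
  have "mgf a ^ n * exp (- real n * e) / 2 \<le> mgf a ^ n * exp (- real n * e) * measure Qn E"
    using elim \<open>0 < mgf a\<close> mult_left_mono[of "1 / 2" "measure Qn E" "mgf a ^ n * exp (- real n * e)"]
    by (simp add: E_def Qn_def S_def c_def)
  then have "ennreal (mgf a ^ n * exp (- real n * e) / 2) \<le> ennreal (mgf a ^ n * exp (- real n * e) * measure Qn E)"
    by (rule ennreal_leI)
  also have "\<dots> = ennreal (mgf a ^ n * exp (- real n * e)) * emeasure Qn E"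
    using \<open>0 < mgf a\<close> by (subst ennreal_mult) (auto simp: Qn.emeasure_eq_measure)
  also have "\<dots> = (\<integral>\<^sup>+x. ennreal (mgf a ^ n * exp (- real n * e)) * indicator E x \<partial>Qn)"
    unfolding E_def Qn_def S_def by (subst nn_integral_cmult_indicator) measurable
  also have "\<dots> \<le> (\<integral>\<^sup>+x. ennreal (mgf a ^ n * exp (- a * S x)) * ennreal (min (exp (S x)) 1) \<partial>Qn)"
  proof (intro nn_integral_mono)
    fix x
    show "ennreal (mgf a ^ n * exp (- real n * e)) * indicator E x \<le>
        ennreal (mgf a ^ n * exp (- a * S x)) * ennreal (min (exp (S x)) 1)"
      using exp_neg_le_exp_tilt_min[OF a _ \<open>0 \<le> (1 - a) * c\<close> \<open>a * c \<le> 0\<close>,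
          where m = "real n" and e = e and S = "S x"] \<open>0 < mgf a\<close>
      by (auto simp: E_def ennreal_mult'[symmetric] mult.assoc intro!: ennreal_leI mult_left_mono
          split: split_indicator)
  qed
  also have "\<dots> = (\<integral>\<^sup>+x. ennreal (min (exp (S x)) 1) \<partial>PiM {..<n} (\<lambda>_. \<nu>))"
    unfolding Qn_def S_def by (rule nn_integral_PiM_tilted[symmetric, OF \<open>0 < mgf a\<close>]) measurable
  finally show ?case
    by (simp add: S_def)
qed

end

section \<open>Weighted affinities\<close>

lemma le_powr_mult_powr:
  fixes P Q a :: real
  assumes "0 < P" and "P \<le> Q" and "a \<in> {0..1}"
  shows "P \<le> P powr a * Q powr (1 - a)"
proof -
  have "P = P powr a * P powr (1 - a)"
    using \<open>0 < P\<close> by (simp flip: powr_add)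
  also have "\<dots> \<le> P powr a * Q powr (1 - a)"
    using assms by (intro mult_left_mono powr_mono2) auto
  finally show ?thesis .
qed

lemma w_affinity_swap: "w_affinity \<mu> \<phi> q p (1 - a) = w_affinity \<mu> \<phi> p q a"
  unfolding w_affinity_def by (simp add: mult_ac)

text \<open>On \<open>{p\<^sup>n \<le> q\<^sup>n}\<close> one has \<open>p\<^sup>n \<le> (p\<^sup>n)\<^sup>a (q\<^sup>n)\<^sup>1\<^sup>-\<^sup>a\<close>, and the integral of the
  latter factorises.\<close>
lemma nn_integral_likelihood_le_w_affinity_power:
  fixes \<phi> p q :: "'a \<Rightarrow> real" and n :: nat
  assumes "sigma_finite_measure \<mu>"
    and [measurable]: "\<phi> \<in> borel_measurable \<mu>" "p \<in> borel_measurable \<mu>" "q \<in> borel_measurable \<mu>"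
    and \<phi>_nonneg: "\<And>x. 0 \<le> \<phi> x" and p_pos: "\<And>x. 0 < p x" and q_pos: "\<And>x. 0 < q x"
    and a: "a \<in> {0..1}"
  shows "(\<integral>\<^sup>+x. ennreal (\<Prod>k<n. \<phi> (x k)) * ennreal (\<Prod>k<n. p (x k)) *
            indicator {y. (\<Prod>k<n. p (y k)) \<le> (\<Prod>k<n. q (y k))} x \<partial>PiM {..<n} (\<lambda>_. \<mu>))
         \<le> w_affinity \<mu> \<phi> p q a ^ n"
proof -
  interpret product_sigma_finite "\<lambda>_::nat. \<mu>"
    using assms(1) by (simp add: product_sigma_finite_def)
  define f where "f y = \<phi> y * p y powr a * q y powr (1 - a)" for y
  have "(\<integral>\<^sup>+x. ennreal (\<Prod>k<n. \<phi> (x k)) * ennreal (\<Prod>k<n. p (x k)) *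
            indicator {y. (\<Prod>k<n. p (y k)) \<le> (\<Prod>k<n. q (y k))} x \<partial>PiM {..<n} (\<lambda>_. \<mu>))
        \<le> (\<integral>\<^sup>+x. (\<Prod>k<n. ennreal (f (x k))) \<partial>PiM {..<n} (\<lambda>_. \<mu>))"
  proof (intro nn_integral_mono)
    fix x :: "nat \<Rightarrow> 'a"
    define F P Q where "F = (\<Prod>k<n. \<phi> (x k))" and "P = (\<Prod>k<n. p (x k))" and "Q = (\<Prod>k<n. q (x k))"
    have "F \<ge> 0" "P > 0" "Q > 0"
      unfolding F_def P_def Q_def using \<phi>_nonneg p_pos q_pos by (auto intro: prod_nonneg prod_pos)
    have "F * P * indicator {y. (\<Prod>k<n. p (y k)) \<le> (\<Prod>k<n. q (y k))} x \<le> F * (P powr a * Q powr (1 - a))"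
      using \<open>F \<ge> 0\<close> le_powr_mult_powr[OF \<open>P > 0\<close> _ a, of Q]
      by (auto simp: P_def Q_def indicator_def intro: mult_left_mono)
    also have "F * (P powr a * Q powr (1 - a)) = (\<Prod>k<n. f (x k))"
      unfolding f_def F_def P_def Q_def
      using p_pos q_pos by (simp add: prod.distrib prod_powr_distrib less_imp_le mult.assoc)
    finally have "ennreal (F * P * indicator {y. (\<Prod>k<n. p (y k)) \<le> (\<Prod>k<n. q (y k))} x)
        \<le> ennreal (\<Prod>k<n. f (x k))"
      by (rule ennreal_leI)
    moreover have "ennreal (F * P * indicator {y. (\<Prod>k<n. p (y k)) \<le> (\<Prod>k<n. q (y k))} x) =
        ennreal F * ennreal P * indicator {y. (\<Prod>k<n. p (y k)) \<le> (\<Prod>k<n. q (y k))} x"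
      using \<open>F \<ge> 0\<close> \<open>P > 0\<close> by (simp add: ennreal_mult split: split_indicator)
    moreover have "ennreal (\<Prod>k<n. f (x k)) = (\<Prod>k<n. ennreal (f (x k)))"
      using \<phi>_nonneg by (intro prod_ennreal[symmetric]) (simp add: f_def)
    ultimately show "ennreal (\<Prod>k<n. \<phi> (x k)) * ennreal (\<Prod>k<n. p (x k)) *
            indicator {y. (\<Prod>k<n. p (y k)) \<le> (\<Prod>k<n. q (y k))} x \<le> (\<Prod>k<n. ennreal (f (x k)))"
      by (simp add: F_def P_def)
  qed
  also have "\<dots> = (\<Prod>k<n. \<integral>\<^sup>+y. ennreal (f y) \<partial>\<mu>)"
    unfolding f_def by (rule product_nn_integral_prod) auto
  also have "\<dots> = w_affinity \<mu> \<phi> p q a ^ n"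
    by (simp add: w_affinity_def f_def)
  finally show ?thesis .
qed

section \<open>Chernoff's lower bound for two hypotheses\<close>

locale weighted_pair =
  fixes \<mu> :: "'a measure" and \<phi> p q :: "'a \<Rightarrow> real"
  assumes sigma_finite: "sigma_finite_measure \<mu>"
    and \<phi>_measurable[measurable]: "\<phi> \<in> borel_measurable \<mu>"
    and p_measurable[measurable]: "p \<in> borel_measurable \<mu>"
    and q_measurable[measurable]: "q \<in> borel_measurable \<mu>"
    and \<phi>_nonneg: "\<And>x. 0 \<le> \<phi> x" and p_pos: "\<And>x. 0 < p x" and q_pos: "\<And>x. 0 < q x"
    and affinity_pos_finite:
      "\<And>\<alpha>. \<alpha> \<in> {0..1} \<Longrightarrow> 0 < w_affinity \<mu> \<phi> p q \<alpha> \<and> w_affinity \<mu> \<phi> p q \<alpha> < \<infinity>"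
begin

abbreviation \<rho> :: "real \<Rightarrow> ennreal" where
  "\<rho> \<equiv> w_affinity \<mu> \<phi> p q"

abbreviation chernoff :: real where
  "chernoff \<equiv> w_chernoff \<mu> \<phi> p q"

definition llr :: "'a \<Rightarrow> real" where
  "llr x = ln (p x) - ln (q x)"

definition trunc_weight :: "nat \<Rightarrow> 'a \<Rightarrow> real" where
  "trunc_weight m x = \<phi> x * q x * indicator {y. \<bar>llr y\<bar> \<le> real m} x"

definition trunc_llr :: "nat \<Rightarrow> 'a \<Rightarrow> real" where
  "trunc_llr m x = (if \<bar>llr x\<bar> \<le> real m then llr x else 0)"

definition trunc_measure :: "nat \<Rightarrow> 'a measure" where
  "trunc_measure m = density \<mu> (\<lambda>x. ennreal (trunc_weight m x))"

definition trunc_affinity :: "nat \<Rightarrow> real \<Rightarrow> ennreal" where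
  "trunc_affinity m a = (\<integral>\<^sup>+x. ennreal (trunc_weight m x * exp (a * llr x)) \<partial>\<mu>)"

lemma llr_measurable[measurable]: "llr \<in> borel_measurable \<mu>"
  unfolding llr_def by measurable

lemma trunc_weight_measurable[measurable]: "trunc_weight m \<in> borel_measurable \<mu>"
  unfolding trunc_weight_def by measurable

lemma trunc_llr_measurable[measurable]: "trunc_llr m \<in> borel_measurable \<mu>"
  unfolding trunc_llr_def by measurable

lemma trunc_weight_nonneg: "0 \<le> trunc_weight m x"
  using \<phi>_nonneg[of x] q_pos[of x] by (simp add: trunc_weight_def)

lemma trunc_weight_mono: "m \<le> m' \<Longrightarrow> trunc_weight m x \<le> trunc_weight m' x"
  using \<phi>_nonneg[of x] q_pos[of x] by (simp add: trunc_weight_def indicator_def)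

lemma affinity_eq: "\<rho> a = (\<integral>\<^sup>+x. ennreal (\<phi> x * q x * exp (a * llr x)) \<partial>\<mu>)"
  unfolding w_affinity_def
proof (intro nn_integral_cong arg_cong[where f = ennreal])
  fix x
  have "p x powr a * q x powr (1 - a) = exp (a * ln (p x)) * exp ((1 - a) * ln (q x))"
    using p_pos[of x] q_pos[of x] by (simp add: powr_def)
  also have "\<dots> = exp (ln (q x)) * exp (a * llr x)"
    by (simp add: llr_def algebra_simps flip: exp_add)
  also have "\<dots> = q x * exp (a * llr x)"
    using q_pos[of x] by simp
  finally show "\<phi> x * p x powr a * q x powr (1 - a) = \<phi> x * q x * exp (a * llr x)"
    by (simp add: mult.assoc)
qed

lemma trunc_affinity_mono: "m \<le> m' \<Longrightarrow> trunc_affinity m a \<le> trunc_affinity m' a"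
  unfolding trunc_affinity_def
  by (intro nn_integral_mono ennreal_leI mult_right_mono trunc_weight_mono) auto

lemma SUP_trunc_affinity: "(SUP m. trunc_affinity m a) = \<rho> a"
proof -
  have "(SUP m. trunc_affinity m a) = (\<integral>\<^sup>+x. (SUP m. ennreal (trunc_weight m x * exp (a * llr x))) \<partial>\<mu>)"
    unfolding trunc_affinity_def
    by (rule nn_integral_monotone_convergence_SUP[symmetric])
       (auto intro!: incseq_SucI le_funI ennreal_leI mult_right_mono trunc_weight_mono)
  also have "\<dots> = (\<integral>\<^sup>+x. ennreal (\<phi> x * q x * exp (a * llr x)) \<partial>\<mu>)"
  proof (intro nn_integral_cong)
    fix x
    obtain m0 :: nat where "\<bar>llr x\<bar> \<le> real m0"
      using real_arch_simple by blast
    then have "trunc_weight m x = \<phi> x * q x" if "m0 \<le> m" for m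
      using that by (simp add: trunc_weight_def)
    then have "(\<lambda>m. ennreal (trunc_weight m x * exp (a * llr x))) \<longlonglongrightarrow> ennreal (\<phi> x * q x * exp (a * llr x))"
      by (intro tendsto_eventually eventually_sequentiallyI[of m0]) simp
    moreover have "incseq (\<lambda>m. ennreal (trunc_weight m x * exp (a * llr x)))"
      by (auto intro!: monoI ennreal_leI mult_right_mono trunc_weight_mono)
    ultimately show "(SUP m. ennreal (trunc_weight m x * exp (a * llr x))) = ennreal (\<phi> x * q x * exp (a * llr x))"
      using LIMSEQ_SUP LIMSEQ_unique by blast
  qed
  finally show ?thesis
    by (simp add: affinity_eq)
qed

lemma trunc_affinity_le: "trunc_affinity m a \<le> \<rho> a"
  by (metis SUP_trunc_affinity SUP_upper UNIV_I)

lemma emeasure_trunc_measure: "emeasure (trunc_measure m) (space (trunc_measure m)) = trunc_affinity m 0"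
  unfolding trunc_measure_def trunc_affinity_def
  by (subst emeasure_density) (auto intro!: nn_integral_cong)

lemma bounded_mgf_trunc: "bounded_mgf (trunc_measure m) (trunc_llr m) (real m)"
proof (intro bounded_mgf.intro finite_measureI bounded_mgf_axioms.intro)
  have "emeasure (trunc_measure m) (space (trunc_measure m)) = trunc_affinity m 0"
    by (rule emeasure_trunc_measure)
  also have "\<dots> < \<infinity>"
    using trunc_affinity_le[of m 0] affinity_pos_finite[of 0] by (simp add: le_less_trans)
  finally show "emeasure (trunc_measure m) (space (trunc_measure m)) \<noteq> \<infinity>"
    by simp
  show "trunc_llr m \<in> borel_measurable (trunc_measure m)"
    by (simp add: trunc_measure_def)
  show "\<bar>trunc_llr m x\<bar> \<le> real m" for x
    by (simp add: trunc_llr_def)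
qed

abbreviation trunc_mgf :: "nat \<Rightarrow> real \<Rightarrow> real" where
  "trunc_mgf m \<equiv> bounded_mgf.mgf (trunc_measure m) (trunc_llr m)"

lemma trunc_affinity_eq_trunc_mgf: "trunc_affinity m a = ennreal (trunc_mgf m a)"
proof -
  interpret bounded_mgf "trunc_measure m" "trunc_llr m" "real m"
    by (rule bounded_mgf_trunc)
  have "ennreal (mgf a) = (\<integral>\<^sup>+x. ennreal (exp (a * trunc_llr m x)) \<partial>trunc_measure m)"
    unfolding mgf_def using integrable_exp_scaled by (intro nn_integral_eq_integral[symmetric]) auto
  also have "\<dots> = trunc_affinity m a"
    unfolding trunc_measure_def trunc_affinity_def
    by (subst nn_integral_density)
       (auto intro!: nn_integral_cong
         simp: trunc_weight_def trunc_llr_def indicator_def ennreal_mult'[symmetric] \<phi>_nonneg q_pos less_imp_le)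
  finally show ?thesis ..
qed

lemma trunc_mgf_nonneg: "0 \<le> trunc_mgf m a"
  by (rule bounded_mgf.mgf_nonneg[OF bounded_mgf_trunc])

lemma trunc_mgf_mono: "m \<le> m' \<Longrightarrow> trunc_mgf m a \<le> trunc_mgf m' a"
  using trunc_affinity_mono[of m m' a] trunc_mgf_nonneg[of m' a]
  by (simp add: trunc_affinity_eq_trunc_mgf)

lemma trunc_mgf_le_affinity:
  assumes "a \<in> {0..1}"
  shows "trunc_mgf m a \<le> enn2real (\<rho> a)"
proof -
  have "enn2real (ennreal (trunc_mgf m a)) \<le> enn2real (\<rho> a)"
    using trunc_affinity_le[of m a] affinity_pos_finite[OF assms]
    by (intro enn2real_mono) (auto simp: trunc_affinity_eq_trunc_mgf)
  then show ?thesis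
    using trunc_mgf_nonneg by simp
qed

lemma affinity_uniformly_positive: "\<exists>c>0. \<forall>a\<in>{0..1}. c \<le> enn2real (\<rho> a)"
proof -
  have "0 < (SUP m. trunc_affinity m 0)"
    using affinity_pos_finite[of 0] by (simp add: SUP_trunc_affinity)
  then obtain m where "0 < trunc_affinity m 0"
    by (auto simp: less_SUP_iff)
  interpret bounded_mgf "trunc_measure m" "trunc_llr m" "real m"
    by (rule bounded_mgf_trunc)
  have "0 < measure (trunc_measure m) (space (trunc_measure m))"
    using \<open>0 < trunc_affinity m 0\<close> emeasure_trunc_measure[of m]
    by (metis emeasure_eq_measure ennreal_less_zero_iff)
  show ?thesis
  proof (intro exI conjI ballI)
    show "0 < exp (- real m) * measure (trunc_measure m) (space (trunc_measure m))"
      using \<open>0 < measure (trunc_measure m) (space (trunc_measure m))\<close> by simp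
    fix a :: real
    assume a: "a \<in> {0..1}"
    have "exp (- real m) * measure (trunc_measure m) (space (trunc_measure m)) \<le>
          exp (- \<bar>a\<bar> * real m) * measure (trunc_measure m) (space (trunc_measure m))"
      using a by (intro mult_right_mono) (auto simp: mult_left_le_one_le)
    also have "\<dots> \<le> mgf a"
      by (rule mgf_ge)
    also have "\<dots> \<le> enn2real (\<rho> a)"
      by (rule trunc_mgf_le_affinity[OF a])
    finally show "exp (- real m) * measure (trunc_measure m) (space (trunc_measure m)) \<le> enn2real (\<rho> a)" .
  qed
qed

lemma bdd_above_neg_ln_affinity: "bdd_above ((\<lambda>a. - ln (enn2real (\<rho> a))) ` {0..1})"
proof -
  obtain c where "c > 0" and c: "\<And>a. a \<in> {0..1} \<Longrightarrow> c \<le> enn2real (\<rho> a)"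
    using affinity_uniformly_positive by blast
  show ?thesis
  proof (rule bdd_aboveI2)
    fix a :: real
    assume "a \<in> {0..1}"
    then show "- ln (enn2real (\<rho> a)) \<le> - ln c"
      using c \<open>c > 0\<close> by (simp add: ln_mono)
  qed
qed

lemma exp_neg_chernoff_le_affinity:
  assumes "a \<in> {0..1}"
  shows "exp (- chernoff) \<le> enn2real (\<rho> a)"
proof -
  have "- ln (enn2real (\<rho> a)) \<le> chernoff"
    unfolding w_chernoff_def using assms by (rule cSUP_upper[OF _ bdd_above_neg_ln_affinity])
  moreover have "0 < enn2real (\<rho> a)"
    using affinity_pos_finite[OF assms] by (simp add: enn2real_positive_iff)
  ultimately show ?thesis
    by (metis exp_le_cancel_iff exp_ln minus_le_iff)
qed

lemma exists_affinity_le_exp_chernoff: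
  assumes "e > 0"
  shows "\<exists>a\<in>{0..1}. \<rho> a \<le> ennreal (exp (- (chernoff - e)))"
proof -
  have "chernoff - e < (SUP a\<in>{0..1}. - ln (enn2real (\<rho> a)))"
    using \<open>e > 0\<close> by (simp add: w_chernoff_def)
  then obtain a where a: "a \<in> {0..1}" and "chernoff - e < - ln (enn2real (\<rho> a))"
    using less_cSUP_iff[OF _ bdd_above_neg_ln_affinity] by auto
  then have "ln (enn2real (\<rho> a)) < - (chernoff - e)"
    by simp
  moreover have "0 < enn2real (\<rho> a)"
    using affinity_pos_finite[OF a] by (simp add: enn2real_positive_iff)
  ultimately have "enn2real (\<rho> a) \<le> exp (- (chernoff - e))"
    by (metis exp_ln exp_less_mono less_imp_le)
  then have "\<rho> a \<le> ennreal (exp (- (chernoff - e)))"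
    using affinity_pos_finite[OF a] by (simp add: enn2real_le)
  with a show ?thesis
    by blast
qed

lemma exists_trunc_mgf_above:
  assumes "e > 0"
  shows "\<exists>m. \<forall>a\<in>{0..1}. exp (- chernoff - e) < trunc_mgf m a"
proof (rule compact_incseq_exceeds_uniformly)
  show "continuous_on {0..1} (trunc_mgf m)" for m
    by (rule bounded_mgf.continuous_on_mgf[OF bounded_mgf_trunc])
  fix a :: real
  assume a: "a \<in> {0..1}"
  have "exp (- chernoff - e) < enn2real (\<rho> a)"
    using exp_neg_chernoff_le_affinity[OF a] \<open>e > 0\<close> by (smt (verit) exp_less_mono)
  then have "ennreal (exp (- chernoff - e)) < ennreal (enn2real (\<rho> a))"
    by (meson ennreal_lessI exp_gt_zero less_trans)
  also have "ennreal (enn2real (\<rho> a)) = (SUP m. ennreal (trunc_mgf m a))"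
    using affinity_pos_finite[OF a]
    by (simp add: SUP_trunc_affinity[symmetric] trunc_affinity_eq_trunc_mgf[symmetric])
  finally show "\<exists>m. exp (- chernoff - e) < trunc_mgf m a"
    by (auto simp: less_SUP_iff ennreal_less_iff)
qed (auto intro: trunc_mgf_mono)

lemma prod_trunc_weight_min_le:
  fixes x :: "nat \<Rightarrow> 'a"
  shows "(\<Prod>k<n. trunc_weight m (x k)) * min (exp (\<Sum>k<n. trunc_llr m (x k))) 1
     \<le> (\<Prod>k<n. \<phi> (x k)) * min (\<Prod>k<n. p (x k)) (\<Prod>k<n. q (x k))"
proof (cases "\<forall>k<n. \<bar>llr (x k)\<bar> \<le> real m")
  case True
  define P where "P = (\<Prod>k<n. p (x k))"
  define Q where "Q = (\<Prod>k<n. q (x k))"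
  have "Q > 0"
    unfolding Q_def by (intro prod_pos) (simp add: q_pos)
  have "(\<Prod>k<n. trunc_weight m (x k)) = (\<Prod>k<n. \<phi> (x k)) * Q"
    using True by (simp add: trunc_weight_def Q_def prod.distrib)
  moreover have "exp (\<Sum>k<n. trunc_llr m (x k)) = (\<Prod>k<n. exp (llr (x k)))"
    using True by (simp add: trunc_llr_def exp_sum)
  moreover have "\<dots> = P / Q"
    using p_pos q_pos by (simp add: llr_def exp_diff P_def Q_def prod_dividef)
  moreover have "Q * min (P / Q) 1 = min P Q"
    using \<open>Q > 0\<close> by (simp add: min_def field_simps)
  ultimately show ?thesis
    by (simp add: P_def Q_def mult.assoc)
next
  case False
  then obtain k where "k < n" "trunc_weight m (x k) = 0"
    by (auto simp: trunc_weight_def)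
  then have "(\<Prod>k<n. trunc_weight m (x k)) = 0"
    by (intro prod_zero) auto
  moreover have "0 \<le> (\<Prod>k<n. \<phi> (x k)) * min (\<Prod>k<n. p (x k)) (\<Prod>k<n. q (x k))"
    by (intro mult_nonneg_nonneg prod_nonneg) (auto simp: \<phi>_nonneg p_pos q_pos less_imp_le prod_nonneg)
  ultimately show ?thesis
    by (simp only: mult_zero_left)
qed

lemma nn_integral_trunc_le_min_likelihood:
  fixes n :: nat
  shows "(\<integral>\<^sup>+x. ennreal (min (exp (\<Sum>k<n. trunc_llr m (x k))) 1) \<partial>PiM {..<n} (\<lambda>_. trunc_measure m))
   \<le> (\<integral>\<^sup>+x. ennreal (\<Prod>k<n. \<phi> (x k)) * ennreal (min (\<Prod>k<n. p (x k)) (\<Prod>k<n. q (x k)))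
        \<partial>PiM {..<n} (\<lambda>_. \<mu>))"
proof -
  have "PiM {..<n} (\<lambda>_. trunc_measure m) =
      density (PiM {..<n} (\<lambda>_. \<mu>)) (\<lambda>x. ennreal (\<Prod>k<n. trunc_weight m (x k)))"
    unfolding trunc_measure_def
    by (rule PiM_density_eq_density_PiM[OF sigma_finite]) (auto simp: trunc_weight_nonneg)
  then have "(\<integral>\<^sup>+x. ennreal (min (exp (\<Sum>k<n. trunc_llr m (x k))) 1) \<partial>PiM {..<n} (\<lambda>_. trunc_measure m))
      = (\<integral>\<^sup>+x. ennreal (\<Prod>k<n. trunc_weight m (x k)) * ennreal (min (exp (\<Sum>k<n. trunc_llr m (x k))) 1)
          \<partial>PiM {..<n} (\<lambda>_. \<mu>))"
    by (simp add: nn_integral_density)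
  also have "\<dots> \<le> (\<integral>\<^sup>+x. ennreal (\<Prod>k<n. \<phi> (x k)) * ennreal (min (\<Prod>k<n. p (x k)) (\<Prod>k<n. q (x k)))
        \<partial>PiM {..<n} (\<lambda>_. \<mu>))"
    using prod_trunc_weight_min_le \<phi>_nonneg p_pos q_pos trunc_weight_nonneg
    by (intro nn_integral_mono)
       (simp add: ennreal_mult'[symmetric] prod_nonneg less_imp_le ennreal_leI)
  finally show ?thesis .
qed

lemma chernoff_lower_bound:
  assumes "e > 0"
  shows "\<forall>\<^sub>F n in sequentially. ennreal (exp (- real n * (chernoff + e))) \<le>
           (\<integral>\<^sup>+x. ennreal (\<Prod>k<n. \<phi> (x k)) * ennreal (min (\<Prod>k<n. p (x k)) (\<Prod>k<n. q (x k)))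
              \<partial>PiM {..<n} (\<lambda>_. \<mu>))"
proof -
  define \<delta> where "\<delta> = e / 3"
  have "\<delta> > 0"
    using \<open>e > 0\<close> by (simp add: \<delta>_def)
  then obtain m where above: "\<And>a. a \<in> {0..1} \<Longrightarrow> exp (- chernoff - \<delta>) < trunc_mgf m a"
    using exists_trunc_mgf_above by blast
  interpret bounded_mgf "trunc_measure m" "trunc_llr m" "real m"
    by (rule bounded_mgf_trunc)
  obtain a where a: "a \<in> {0..1}" and minimal: "\<And>b. b \<in> {0..1} \<Longrightarrow> mgf a \<le> mgf b"
    using continuous_attains_inf[OF compact_Icc _ continuous_on_mgf, of 0 1] by auto
  have "exp (- chernoff - \<delta>) < mgf a"
    using above[OF a] .
  then have "0 < mgf a"
    using exp_gt_zero less_trans by blast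
  have tilted_bound: "\<forall>\<^sub>F n in sequentially. ennreal (mgf a ^ n * exp (- real n * \<delta>) / 2) \<le>
      (\<integral>\<^sup>+x. ennreal (min (exp (\<Sum>k<n. trunc_llr m (x k))) 1) \<partial>PiM {..<n} (\<lambda>_. trunc_measure m))"
    by (rule PiM_min_exp_sum_lower_bound[OF a minimal \<open>0 < mgf a\<close> \<open>\<delta> > 0\<close>])
  show ?thesis
    using tilted_bound eventually_le_exp_linear[OF \<open>\<delta> > 0\<close>, of 2]
  proof eventually_elim
    case (elim n)
    have "exp (- real n * (chernoff + e)) =
          exp (- chernoff - \<delta>) ^ n * exp (- real n * \<delta>) / exp (\<delta> * real n)"
      by (simp add: \<delta>_def algebra_simps flip: exp_of_nat_mult exp_add exp_diff)
    also have "\<dots> \<le> mgf a ^ n * exp (- real n * \<delta>) / 2"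
      using \<open>exp (- chernoff - \<delta>) < mgf a\<close> elim(2) mgf_nonneg[of a]
      by (intro frac_le mult_right_mono power_mono) auto
    finally have "ennreal (exp (- real n * (chernoff + e))) \<le> ennreal (mgf a ^ n * exp (- real n * \<delta>) / 2)"
      by (rule ennreal_leI)
    also note elim(1)
    also note nn_integral_trunc_le_min_likelihood
    finally show ?case .
  qed
qed

end

section \<open>Testing \<open>M\<close> hypotheses\<close>

locale weighted_testing =
  fixes \<mu> :: "'a measure" and M :: nat and p :: "nat \<Rightarrow> 'a \<Rightarrow> real" and \<phi> :: "'a \<Rightarrow> real"
  assumes M: "2 \<le> M"
    and sigma_finite: "sigma_finite_measure \<mu>"
    and p_measurable: "\<And>i. i \<in> {1..M} \<Longrightarrow> p i \<in> borel_measurable \<mu>"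
    and p_pos: "\<And>i x. i \<in> {1..M} \<Longrightarrow> 0 < p i x"
    and \<phi>_measurable[measurable]: "\<phi> \<in> borel_measurable \<mu>"
    and \<phi>_nonneg: "\<And>x. 0 \<le> \<phi> x"
    and affinity_pos_finite: "\<And>i j \<alpha>. 1 \<le> i \<Longrightarrow> i < j \<Longrightarrow> j \<le> M \<Longrightarrow> \<alpha> \<in> {0..1} \<Longrightarrow>
      0 < w_affinity \<mu> \<phi> (p i) (p j) \<alpha> \<and> w_affinity \<mu> \<phi> (p i) (p j) \<alpha> < \<infinity>"
begin

abbreviation lik :: "nat \<Rightarrow> nat \<Rightarrow> (nat \<Rightarrow> 'a) \<Rightarrow> real" where
  "lik n i x \<equiv> \<Prod>k<n. p i (x k)"

abbreviation weight :: "nat \<Rightarrow> (nat \<Rightarrow> 'a) \<Rightarrow> real" where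
  "weight n x \<equiv> \<Prod>k<n. \<phi> (x k)"

definition min_chernoff :: real where
  "min_chernoff = Min {w_chernoff \<mu> \<phi> (p i) (p j) | i j. 1 \<le> i \<and> i < j \<and> j \<le> M}"

lemma weighted_pair_of:
  assumes "1 \<le> i" "i < j" "j \<le> M"
  shows "weighted_pair \<mu> \<phi> (p i) (p j)"
  using assms
  by (intro weighted_pair.intro sigma_finite p_measurable p_pos \<phi>_measurable \<phi>_nonneg affinity_pos_finite) auto

lemma lik_measurable[measurable]:
  assumes "i \<in> {1..M}"
  shows "lik n i \<in> borel_measurable (PiM {..<n} (\<lambda>_. \<mu>))"
proof -
  note p_measurable[OF assms, measurable]
  show ?thesis
    by measurable
qed

lemma pred_decision_ne:
  assumes "\<delta> \<in> PiM {..<n} (\<lambda>_. \<mu>) \<rightarrow>\<^sub>M count_space {1..M}"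
  shows "Measurable.pred (PiM {..<n} (\<lambda>_. \<mu>)) (\<lambda>x. \<delta> x \<noteq> i)"
  using assms by measurable

lemma weighted_loss_eq:
  assumes i: "i \<in> {1..M}" and \<delta>: "\<delta> \<in> PiM {..<n} (\<lambda>_. \<mu>) \<rightarrow>\<^sub>M count_space {1..M}"
  shows "weighted_loss \<mu> \<phi> p n \<delta> i =
    (\<integral>\<^sup>+x. ennreal (lik n i x) * (ennreal (weight n x) * indicator {y. \<delta> y \<noteq> i} x) \<partial>PiM {..<n} (\<lambda>_. \<mu>))"
proof -
  note pred_decision_ne[OF \<delta>, measurable]
  have "PiM {..<n} (\<lambda>_. density \<mu> (\<lambda>z. ennreal (p i z))) =
        density (PiM {..<n} (\<lambda>_. \<mu>)) (\<lambda>x. ennreal (lik n i x))"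
    using p_pos[OF i] p_measurable[OF i]
    by (intro PiM_density_eq_density_PiM sigma_finite) (auto simp: less_imp_le)
  then show ?thesis
    unfolding weighted_loss_def using lik_measurable[OF i]
    by (simp add: nn_integral_density)
qed

lemma opt_loss_ge_min_likelihood:
  assumes i: "i \<in> {1..M}" and j: "j \<in> {1..M}" and "i \<noteq> j"
  shows "(\<integral>\<^sup>+x. ennreal (weight n x) * ennreal (min (lik n i x) (lik n j x)) \<partial>PiM {..<n} (\<lambda>_. \<mu>))
           \<le> opt_loss \<mu> \<phi> p M n"
  unfolding opt_loss_def
proof (rule INF_greatest)
  fix \<delta> assume \<delta>: "\<delta> \<in> PiM {..<n} (\<lambda>_. \<mu>) \<rightarrow>\<^sub>M count_space {1..M}"
  note pred_decision_ne[OF \<delta>, measurable] lik_measurable[OF i, measurable] lik_measurable[OF j, measurable]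
  define f where "f k x = ennreal (lik n k x) * (ennreal (weight n x) * indicator {y. \<delta> y \<noteq> k} x)" for k x
  have "ennreal (weight n x) * ennreal (min (lik n i x) (lik n j x)) \<le> f i x + f j x" for x
  proof -
    have "ennreal (weight n x) * ennreal (min (lik n i x) (lik n j x)) \<le> ennreal (lik n k x) * ennreal (weight n x)"
      if "k \<in> {i, j}" for k
      using that by (auto simp: mult.commute intro!: mult_left_mono ennreal_leI)
    then show ?thesis
      using \<open>i \<noteq> j\<close> by (cases "\<delta> x = i") (auto simp: f_def intro: order_trans add_increasing add_increasing2)
  qed
  then have "(\<integral>\<^sup>+x. ennreal (weight n x) * ennreal (min (lik n i x) (lik n j x)) \<partial>PiM {..<n} (\<lambda>_. \<mu>))
      \<le> (\<integral>\<^sup>+x. f i x + f j x \<partial>PiM {..<n} (\<lambda>_. \<mu>))"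
    by (intro nn_integral_mono)
  also have "\<dots> = weighted_loss \<mu> \<phi> p n \<delta> i + weighted_loss \<mu> \<phi> p n \<delta> j"
    unfolding f_def weighted_loss_eq[OF i \<delta>] weighted_loss_eq[OF j \<delta>]
    by (intro nn_integral_add) measurable
  also have "\<dots> = (\<Sum>k\<in>{i, j}. weighted_loss \<mu> \<phi> p n \<delta> k)"
    using \<open>i \<noteq> j\<close> by simp
  also have "\<dots> \<le> total_loss \<mu> \<phi> p M n \<delta>"
    unfolding total_loss_def using i j by (intro sum_mono2) auto
  finally show "(\<integral>\<^sup>+x. ennreal (weight n x) * ennreal (min (lik n i x) (lik n j x)) \<partial>PiM {..<n} (\<lambda>_. \<mu>))
      \<le> total_loss \<mu> \<phi> p M n \<delta>" .
qed

lemma finite_chernoff_pairs: "finite {w_chernoff \<mu> \<phi> (p i) (p j) | i j. 1 \<le> i \<and> i < j \<and> j \<le> M}"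
proof -
  have "{w_chernoff \<mu> \<phi> (p i) (p j) | i j. 1 \<le> i \<and> i < j \<and> j \<le> M}
        \<subseteq> (\<lambda>(i, j). w_chernoff \<mu> \<phi> (p i) (p j)) ` ({1..M} \<times> {1..M})"
    by auto
  then show ?thesis
    by (rule finite_subset) auto
qed

lemma min_chernoff_le: "1 \<le> i \<Longrightarrow> i < j \<Longrightarrow> j \<le> M \<Longrightarrow> min_chernoff \<le> w_chernoff \<mu> \<phi> (p i) (p j)"
  unfolding min_chernoff_def by (rule Min_le[OF finite_chernoff_pairs]) auto

lemma min_chernoff_attained:
  obtains i j where "1 \<le> i" "i < j" "j \<le> M" "min_chernoff = w_chernoff \<mu> \<phi> (p i) (p j)"
proof -
  have "w_chernoff \<mu> \<phi> (p 1) (p 2) \<in> {w_chernoff \<mu> \<phi> (p i) (p j) | i j. 1 \<le> i \<and> i < j \<and> j \<le> M}"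
    using M by (intro CollectI exI[of _ 1] exI[of _ 2]) simp
  then have "min_chernoff \<in> {w_chernoff \<mu> \<phi> (p i) (p j) | i j. 1 \<le> i \<and> i < j \<and> j \<le> M}"
    unfolding min_chernoff_def by (intro Min_in[OF finite_chernoff_pairs]) auto
  then show ?thesis
    using that by blast
qed

lemma exists_affinity_le_exp_min_chernoff:
  assumes i: "i \<in> {1..M}" and j: "j \<in> {1..M}" and "i \<noteq> j" and "e > 0"
  shows "\<exists>a\<in>{0..1}. w_affinity \<mu> \<phi> (p i) (p j) a \<le> ennreal (exp (- (min_chernoff - e)))"
proof -
  have ordered: "\<exists>a\<in>{0..1}. w_affinity \<mu> \<phi> (p i) (p j) a \<le> ennreal (exp (- (min_chernoff - e)))"
    if "1 \<le> i" "i < j" "j \<le> M" for i j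
  proof -
    interpret weighted_pair \<mu> \<phi> "p i" "p j"
      using that by (rule weighted_pair_of)
    obtain a where "a \<in> {0..1}" and "\<rho> a \<le> ennreal (exp (- (chernoff - e)))"
      using exists_affinity_le_exp_chernoff[OF \<open>e > 0\<close>] by blast
    moreover have "ennreal (exp (- (chernoff - e))) \<le> ennreal (exp (- (min_chernoff - e)))"
      using min_chernoff_le[OF that] by (intro ennreal_leI) simp
    ultimately show ?thesis
      by (intro bexI[of _ a] order_trans[OF \<open>\<rho> a \<le> _\<close>])
  qed
  show ?thesis
  proof (cases "i < j")
    case True
    then show ?thesis
      using ordered i j by simp
  next
    case False
    then have "j < i"
      using \<open>i \<noteq> j\<close> by simp
    then obtain a where "a \<in> {0..1}" "w_affinity \<mu> \<phi> (p j) (p i) a \<le> ennreal (exp (- (min_chernoff - e)))"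
      using ordered[of j i] i j by auto
    then show ?thesis
      by (intro bexI[of _ "1 - a"]) (auto simp: w_affinity_swap)
  qed
qed

lemma exists_max_likelihood_rule:
  obtains \<delta> where "\<delta> \<in> PiM {..<n} (\<lambda>_. \<mu>) \<rightarrow>\<^sub>M count_space {1..M}"
    and "\<And>x j. j \<in> {1..M} \<Longrightarrow> lik n j x \<le> lik n (\<delta> x) x"
proof -
  (* Extending p by 1 outside {1..M} makes every likelihood measurable, hence the rule. *)
  define p' where "p' j = (if j \<in> {1..M} then p j else (\<lambda>_. 1))" for j
  have p'_measurable[measurable]: "p' j \<in> borel_measurable \<mu>" for j
    by (cases "j \<in> {1..M}") (simp_all add: p'_def p_measurable)
  have [measurable]: "Measurable.pred (PiM {..<n} (\<lambda>_. \<mu>)) (\<lambda>x. (\<Prod>k<n. p' j (x k)) \<le> (\<Prod>k<n. p' i (x k)))"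
    for i j
    unfolding pred_def by (rule borel_measurable_le) measurable
  define \<delta> where
    "\<delta> x = (LEAST i. i \<in> {1..M} \<and> (\<forall>j\<in>{1..M}. (\<Prod>k<n. p' j (x k)) \<le> (\<Prod>k<n. p' i (x k))))" for x
  have \<delta>_max: "\<delta> x \<in> {1..M} \<and> (\<forall>j\<in>{1..M}. (\<Prod>k<n. p' j (x k)) \<le> (\<Prod>k<n. p' (\<delta> x) (x k)))" for x
  proof -
    define f where "f i = (\<Prod>k<n. p' i (x k))" for i
    have "Max (f ` {1..M}) \<in> f ` {1..M}"
      using M by (intro Max_in) auto
    then obtain i where "i \<in> {1..M}" "f i = Max (f ` {1..M})"
      by auto
    then have "i \<in> {1..M} \<and> (\<forall>j\<in>{1..M}. f j \<le> f i)"
      by simp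
    then show ?thesis
      unfolding \<delta>_def f_def by (rule LeastI)
  qed
  show ?thesis
  proof
    show "\<delta> \<in> PiM {..<n} (\<lambda>_. \<mu>) \<rightarrow>\<^sub>M count_space {1..M}"
    proof (rule measurable_count_space_extend[OF subset_UNIV])
      show "\<delta> \<in> space (PiM {..<n} (\<lambda>_. \<mu>)) \<rightarrow> {1..M}"
        using \<delta>_max by auto
      show "\<delta> \<in> PiM {..<n} (\<lambda>_. \<mu>) \<rightarrow>\<^sub>M count_space UNIV"
        unfolding \<delta>_def by measurable
    qed
    fix x j
    assume "j \<in> {1..M}"
    moreover have "p' i = p i" if "i \<in> {1..M}" for i
      using that by (simp add: p'_def)
    ultimately show "lik n j x \<le> lik n (\<delta> x) x"
      using \<delta>_max[of x] by metis
  qed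
qed

lemma opt_loss_le:
  assumes "e > 0"
  shows "opt_loss \<mu> \<phi> p M n \<le> ennreal (real M ^ 2 * exp (- real n * (min_chernoff - e)))"
proof -
  obtain \<delta> where \<delta>: "\<delta> \<in> PiM {..<n} (\<lambda>_. \<mu>) \<rightarrow>\<^sub>M count_space {1..M}"
    and \<delta>_max: "\<And>x j. j \<in> {1..M} \<Longrightarrow> lik n j x \<le> lik n (\<delta> x) x"
    using exists_max_likelihood_rule[of n] by blast
  define c where "c = ennreal (exp (- (min_chernoff - e))) ^ n"
  define h where "h i j x = ennreal (weight n x) * ennreal (lik n i x) * indicator {y. lik n i y \<le> lik n j y} x"
    for i j x
  have h_le: "(\<integral>\<^sup>+x. h i j x \<partial>PiM {..<n} (\<lambda>_. \<mu>)) \<le> c"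
    if i: "i \<in> {1..M}" and j: "j \<in> {1..M} - {i}" for i j
  proof -
    obtain a where a: "a \<in> {0..1}" "w_affinity \<mu> \<phi> (p i) (p j) a \<le> ennreal (exp (- (min_chernoff - e)))"
      using exists_affinity_le_exp_min_chernoff[OF i _ _ \<open>e > 0\<close>, of j] j by auto
    have "(\<integral>\<^sup>+x. h i j x \<partial>PiM {..<n} (\<lambda>_. \<mu>)) \<le> w_affinity \<mu> \<phi> (p i) (p j) a ^ n"
      unfolding h_def using i j p_measurable p_pos
      by (intro nn_integral_likelihood_le_w_affinity_power[OF sigma_finite] \<phi>_nonneg a(1)) auto
    also have "\<dots> \<le> c"
      unfolding c_def by (intro power_mono a(2)) simp
    finally show ?thesis .
  qed
  have "weighted_loss \<mu> \<phi> p n \<delta> i \<le> (\<Sum>j\<in>{1..M} - {i}. c)" if i: "i \<in> {1..M}" for i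
  proof -
    have "weighted_loss \<mu> \<phi> p n \<delta> i \<le> (\<integral>\<^sup>+x. (\<Sum>j\<in>{1..M} - {i}. h i j x) \<partial>PiM {..<n} (\<lambda>_. \<mu>))"
      unfolding weighted_loss_eq[OF i \<delta>]
    proof (intro nn_integral_mono)
      fix x
      assume x: "x \<in> space (PiM {..<n} (\<lambda>_. \<mu>))"
      show "ennreal (lik n i x) * (ennreal (weight n x) * indicator {y. \<delta> y \<noteq> i} x) \<le> (\<Sum>j\<in>{1..M} - {i}. h i j x)"
      proof (cases "\<delta> x = i")
        case False
        then have "\<delta> x \<in> {1..M} - {i}"
          using measurable_space[OF \<delta> x] by simp
        then have "ennreal (lik n i x) * (ennreal (weight n x) * indicator {y. \<delta> y \<noteq> i} x) = h i (\<delta> x) x"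
          using False \<delta>_max[OF i, of x] by (simp add: h_def mult.commute)
        also have "\<dots> \<le> (\<Sum>j\<in>{1..M} - {i}. h i j x)"
          using \<open>\<delta> x \<in> {1..M} - {i}\<close> by (intro member_le_sum) auto
        finally show ?thesis .
      qed simp
    qed
    also have "\<dots> = (\<Sum>j\<in>{1..M} - {i}. \<integral>\<^sup>+x. h i j x \<partial>PiM {..<n} (\<lambda>_. \<mu>))"
    proof (intro nn_integral_sum)
      fix j assume "j \<in> {1..M} - {i}"
      then have j: "j \<in> {1..M}"
        by simp
      note lik_measurable[OF i, measurable] lik_measurable[OF j, measurable]
      have [measurable]: "Measurable.pred (PiM {..<n} (\<lambda>_. \<mu>)) (\<lambda>x. lik n i x \<le> lik n j x)"
        unfolding pred_def by (rule borel_measurable_le) measurable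
      show "h i j \<in> borel_measurable (PiM {..<n} (\<lambda>_. \<mu>))"
        unfolding h_def indicator_def mem_Collect_eq by measurable
    qed
    also have "\<dots> \<le> (\<Sum>j\<in>{1..M} - {i}. c)"
      using h_le[OF i] by (intro sum_mono)
    finally show ?thesis .
  qed
  then have "total_loss \<mu> \<phi> p M n \<delta> \<le> (\<Sum>i=1..M. \<Sum>j\<in>{1..M} - {i}. c)"
    unfolding total_loss_def by (intro sum_mono) auto
  also have "\<dots> \<le> (\<Sum>i=1..M. \<Sum>j=1..M. c)"
    by (intro sum_mono sum_mono2) auto
  also have "\<dots> = ennreal (real M ^ 2 * exp (- real n * (min_chernoff - e)))"
    by (simp add: c_def ennreal_power ennreal_of_nat_eq_real_of_nat ennreal_mult'[symmetric]
        power2_eq_square exp_of_nat_mult[symmetric] algebra_simps)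
  finally show ?thesis
    unfolding opt_loss_def using \<delta> by (meson INF_lower2)
qed

lemma opt_loss_ge:
  assumes "e > 0"
  shows "\<forall>\<^sub>F n in sequentially. ennreal (exp (- real n * (min_chernoff + e))) \<le> opt_loss \<mu> \<phi> p M n"
proof -
  obtain i j where ij: "1 \<le> i" "i < j" "j \<le> M" and min_eq: "min_chernoff = w_chernoff \<mu> \<phi> (p i) (p j)"
    by (rule min_chernoff_attained)
  interpret weighted_pair \<mu> \<phi> "p i" "p j"
    using ij by (rule weighted_pair_of)
  from chernoff_lower_bound[OF assms] show ?thesis
  proof eventually_elim
    case (elim n)
    also have "(\<integral>\<^sup>+x. ennreal (weight n x) * ennreal (min (lik n i x) (lik n j x)) \<partial>PiM {..<n} (\<lambda>_. \<mu>))
        \<le> opt_loss \<mu> \<phi> p M n"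
      using ij by (intro opt_loss_ge_min_likelihood) auto
    finally show ?case
      by (simp add: min_eq)
  qed
qed

lemma tendsto_neg_ln_opt_loss:
  "(\<lambda>n. - ln (enn2real (opt_loss \<mu> \<phi> p M n)) / real n) \<longlonglongrightarrow> min_chernoff"
proof (rule tendsto_neg_ln_div_of_exp_bounds[where K = "real M ^ 2"])
  fix e :: real
  assume "e > 0"
  have upper: "enn2real (opt_loss \<mu> \<phi> p M n) \<le> real M ^ 2 * exp (- real n * (min_chernoff - e))" for n
    using opt_loss_le[OF \<open>e > 0\<close>] by (intro enn2real_leI) auto
  then show "\<forall>\<^sub>F n in sequentially. enn2real (opt_loss \<mu> \<phi> p M n) \<le> real M ^ 2 * exp (- real n * (min_chernoff - e))"
    by simp
  from opt_loss_ge[OF \<open>e > 0\<close>]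
  show "\<forall>\<^sub>F n in sequentially. exp (- real n * (min_chernoff + e)) \<le> enn2real (opt_loss \<mu> \<phi> p M n)"
  proof eventually_elim
    case (elim n)
    have "opt_loss \<mu> \<phi> p M n < \<infinity>"
      using opt_loss_le[OF \<open>e > 0\<close>, of n] by (simp add: le_less_trans)
    then show ?case
      using enn2real_mono[OF elim] by simp
  qed
qed

end

theorem theorem4p6:
  fixes \<mu> :: "'a::polish_space measure"
    and M :: nat
    and p :: "nat \<Rightarrow> 'a \<Rightarrow> real"
    and \<phi> :: "'a \<Rightarrow> real"
  assumes M: "M \<ge> 2"
    and borel: "sets \<mu> = sets borel"
    and sfin: "sigma_finite_measure \<mu>"
    and p_meas: "\<And>i. i \<in> {1..M} \<Longrightarrow> p i \<in> borel_measurable \<mu>"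
    and p_pos: "\<And>i x. i \<in> {1..M} \<Longrightarrow> p i x > 0"
    and p_prob: "\<And>i. i \<in> {1..M} \<Longrightarrow> prob_space (density \<mu> (\<lambda>x. ennreal (p i x)))"
    and phi_meas: "\<phi> \<in> borel_measurable \<mu>"
    and phi_nonneg: "\<And>x. \<phi> x \<ge> 0"
    and aff: "\<And>i j \<alpha>. 1 \<le> i \<Longrightarrow> i < j \<Longrightarrow> j \<le> M \<Longrightarrow> \<alpha> \<in> {0..1} \<Longrightarrow>
               0 < w_affinity \<mu> \<phi> (p i) (p j) \<alpha> \<and> w_affinity \<mu> \<phi> (p i) (p j) \<alpha> < \<infinity>"
  shows "(\<lambda>n. - ln (enn2real (opt_loss \<mu> \<phi> p M n)) / real n)
           \<longlonglongrightarrow> Min {w_chernoff \<mu> \<phi> (p i) (p j) | i j. 1 \<le> i \<and> i < j \<and> j \<le> M}"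
proof -
  interpret weighted_testing \<mu> M p \<phi>
    by (rule weighted_testing.intro) (fact M sfin p_meas p_pos phi_meas phi_nonneg aff)+
  show ?thesis
    using tendsto_neg_ln_opt_loss unfolding min_chernoff_def .
qed

end
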